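(* Fix an integer $C\ge 2$. There exists $\rho_0>0$ (depending only on $C$) such that for every $\rho\ge\rho_0$ and every $h_S\in[0,1]$, with $h_L^\pm$ and $\hat h_F$ as in the context (so $0<h_L^-<h_L^+<1$): - if $h_L=\frac1C$, then $\dfrac{\partial \mathcal{J}_h^{\mathcal{G}}}{\partial h_F}=0$ for all $h_F\in(-1,1)$; - if $h_L\neq \frac1C$, then $\dfrac{\partial \mathcal{J}_h^{\mathcal{G}}}{\partial h_F}$ has the same sign as $\hat h_F-h_F$; in particular it is $<0$ if $h_L\in(0,h_L^-)$, or if $h_L\in(h_L^-,h_L^+)$ and $h_F\in(\hat h_F,1)$; it is $>0$ if $h_L\in(h_L^+,1]$, or if $h_L\in(h_L^-,h_L^+)$ and $h_F\in(-1,\hat h_F)$; and it is $=0$ if $h_L\in(h_L^-,h_L^+)$ and $h_F=\hat h_F$.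
   Context: Setting: $C\ge 2$ is the number of classes, $h_L\in[0,1]$ (label homophily), $h_S\in[0,1]$ (structural homophily), $h_F\in(-1,1)$ (feature homophily), and $\rho>0$ a real parameter (the spectral radius of the adjacency matrix). Define $$p_0=\frac{h_LC-1}{C-1},\qquad p_1=\frac{1-h_L}{C-1},\qquad \omega=\frac{h_F}{\rho},\qquad Q=C\,p_1^2+\frac{C(1-h_S)^2}{C-1}+p_0^2\ (>0),$$ $$\mathcal{J}_h^{\neg\mathcal{G}}=\frac{1-\omega^2 Q}{(1-\omega p_0)^2},\qquad \mathcal{J}_h^{\mathcal{G}}=\frac{p_0^2}{Q}\,\mathcal{J}_h^{\neg\mathcal{G}}.$$ Define $\hat h_F=\rho p_0/Q$ and $$h_L^+=\frac{4C+C(C-1)\rho-\sqrt{[4C+C(C-1)\rho]^2-4C(C+1)\,[\,C+1+(C-1)\rho+C(C-1)(1-h_S)^2\,]}}{2C(C+1)},$$ $$h_L^-=\frac{4C-C(C-1)\rho+\sqrt{[4C-C(C-1)\rho]^2-4C(C+1)\,[\,C+1-(C-1)\rho+C(C-1)(1-h_S)^2\,]}}{2C(C+1)}.$$ Partial derivatives are taken with $C$, $\rho$, $h_L$, $h_S$ held fixed. *)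

theory Defs
  imports "HOL-Analysis.Analysis"
begin

text \<open>Quantities from the paper; C is the number of classes (a natural number, C \<ge> 2),
  rho the spectral radius, hL, hS, hF label / structural / feature homophily.\<close>

definition p0 :: "nat \<Rightarrow> real \<Rightarrow> real" where
  "p0 C hL = (hL * real C - 1) / (real C - 1)"

definition p1 :: "nat \<Rightarrow> real \<Rightarrow> real" where
  "p1 C hL = (1 - hL) / (real C - 1)"

definition omega :: "real \<Rightarrow> real \<Rightarrow> real" where
  "omega rho hF = hF / rho"

definition Qv :: "nat \<Rightarrow> real \<Rightarrow> real \<Rightarrow> real" where
  "Qv C hL hS = real C * (p1 C hL)^2 + real C * (1 - hS)^2 / (real C - 1) + (p0 C hL)^2"

definition J_notG :: "nat \<Rightarrow> real \<Rightarrow> real \<Rightarrow> real \<Rightarrow> real \<Rightarrow> real" where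
  "J_notG C rho hL hS hF =
     (1 - (omega rho hF)^2 * Qv C hL hS) / (1 - omega rho hF * p0 C hL)^2"

definition J_G :: "nat \<Rightarrow> real \<Rightarrow> real \<Rightarrow> real \<Rightarrow> real \<Rightarrow> real" where
  "J_G C rho hL hS hF = (p0 C hL)^2 / Qv C hL hS * J_notG C rho hL hS hF"

definition hF_hat :: "nat \<Rightarrow> real \<Rightarrow> real \<Rightarrow> real \<Rightarrow> real" where
  "hF_hat C rho hL hS = rho * p0 C hL / Qv C hL hS"

definition hL_plus :: "nat \<Rightarrow> real \<Rightarrow> real \<Rightarrow> real" where
  "hL_plus C rho hS =
    (4 * real C + real C * (real C - 1) * rho
      - sqrt ((4 * real C + real C * (real C - 1) * rho)^2
              - 4 * real C * (real C + 1) *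
                (real C + 1 + (real C - 1) * rho + real C * (real C - 1) * (1 - hS)^2)))
    / (2 * real C * (real C + 1))"

definition hL_minus :: "nat \<Rightarrow> real \<Rightarrow> real \<Rightarrow> real" where
  "hL_minus C rho hS =
    (4 * real C - real C * (real C - 1) * rho
      + sqrt ((4 * real C - real C * (real C - 1) * rho)^2
              - 4 * real C * (real C + 1) *
                (real C + 1 - (real C - 1) * rho + real C * (real C - 1) * (1 - hS)^2)))
    / (2 * real C * (real C + 1))"

end

theory Submission
  imports Defs
begin

text \<open>Differentiating, \<open>\<partial>J/\<partial>h\<^sub>F = 2 p\<^sub>0\<^sup>2 (\<rho> p\<^sub>0/Q - h\<^sub>F) / (\<rho>\<^sup>2 (1 - \<omega> p\<^sub>0)\<^sup>3)\<close>, and the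
  denominator is positive for \<open>|h\<^sub>F| < 1 \<le> \<rho>\<close>, so the derivative has the sign of
  \<open>\<hat>h\<^sub>F - h\<^sub>F\<close> unless \<open>p\<^sub>0 = 0\<close>. Up to the factor \<open>(C-1)\<^sup>2\<close>, both \<open>Q + \<rho> p\<^sub>0\<close> and
  \<open>Q - \<rho> p\<^sub>0\<close> are convex quadratics in \<open>h\<^sub>L\<close>, and \<open>h\<^sub>L\<^sup>-\<close>, \<open>h\<^sub>L\<^sup>+\<close> are their upper and
  lower roots. For \<open>\<rho>\<close> large the first is negative at \<open>h\<^sub>L = 0\<close> and the second at
  \<open>h\<^sub>L = 1\<close>; hence \<open>\<hat>h\<^sub>F < -1\<close> on \<open>(0, h\<^sub>L\<^sup>-)\<close> and \<open>\<hat>h\<^sub>F > 1\<close> on \<open>(h\<^sub>L\<^sup>+, 1]\<close>, while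
  evaluating \<open>p\<^sub>0\<close> at the roots places them on either side of \<open>1/C\<close>.\<close>

definition root_lo :: "real \<Rightarrow> real \<Rightarrow> real \<Rightarrow> real" where
  "root_lo a b k = (b - sqrt (b\<^sup>2 - 4*a*k)) / (2*a)"

definition root_hi :: "real \<Rightarrow> real \<Rightarrow> real \<Rightarrow> real" where
  "root_hi a b k = (b + sqrt (b\<^sup>2 - 4*a*k)) / (2*a)"

lemma quadratic_eq_root_factors:
  fixes a b k x :: real
  assumes "a \<noteq> 0" "b\<^sup>2 - 4*a*k \<ge> 0"
  shows "a*x\<^sup>2 - b*x + k = a * (x - root_lo a b k) * (x - root_hi a b k)"
proof -
  define s where "s = sqrt (b\<^sup>2 - 4*a*k)"
  have "s\<^sup>2 = b\<^sup>2 - 4*a*k" using assms(2) by (simp add: s_def)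
  then show ?thesis
    using assms(1) unfolding root_lo_def root_hi_def s_def[symmetric]
    by (simp add: field_simps power2_eq_square) (metis distrib_left)
qed

lemma quadratic_root_lo_eq_0:
  fixes a b k :: real
  assumes "a \<noteq> 0" "b\<^sup>2 - 4*a*k \<ge> 0"
  shows "a*(root_lo a b k)\<^sup>2 - b*root_lo a b k + k = 0"
  using quadratic_eq_root_factors[OF assms] by simp

lemma quadratic_root_hi_eq_0:
  fixes a b k :: real
  assumes "a \<noteq> 0" "b\<^sup>2 - 4*a*k \<ge> 0"
  shows "a*(root_hi a b k)\<^sup>2 - b*root_hi a b k + k = 0"
  using quadratic_eq_root_factors[OF assms] by simp

lemma root_lo_less_root_hi_iff:
  fixes a b k :: real
  assumes "a > 0"
  shows "root_lo a b k < root_hi a b k \<longleftrightarrow> b\<^sup>2 - 4*a*k > 0"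
proof -
  have "root_lo a b k < root_hi a b k \<longleftrightarrow> b - sqrt (b\<^sup>2 - 4*a*k) < b + sqrt (b\<^sup>2 - 4*a*k)"
    using assms unfolding root_lo_def root_hi_def by (simp add: divide_less_cancel)
  then show ?thesis by simp
qed

lemma quadratic_neg_iff_between_roots:
  fixes a b k x :: real
  assumes "a > 0"
  shows "a*x\<^sup>2 - b*x + k < 0 \<longleftrightarrow> root_lo a b k < x \<and> x < root_hi a b k"
proof
  assume neg: "a*x\<^sup>2 - b*x + k < 0"
  have "b\<^sup>2 - 4*a*k = (2*a*x - b)\<^sup>2 - 4*a*(a*x\<^sup>2 - b*x + k)"
    by (simp add: algebra_simps power2_eq_square)
  moreover have "4*a*(a*x\<^sup>2 - b*x + k) < 0" using neg assms by (simp add: mult_pos_neg)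
  ultimately have "(2*a*x - b)\<^sup>2 < b\<^sup>2 - 4*a*k" by linarith
  then have "\<bar>2*a*x - b\<bar> < sqrt (b\<^sup>2 - 4*a*k)"
    using real_sqrt_less_mono by fastforce
  then have "b - sqrt (b\<^sup>2 - 4*a*k) < x * (2*a)" "x * (2*a) < b + sqrt (b\<^sup>2 - 4*a*k)"
    by (auto simp: abs_less_iff algebra_simps)
  with assms show "root_lo a b k < x \<and> x < root_hi a b k"
    by (simp add: root_lo_def root_hi_def pos_divide_less_eq pos_less_divide_eq)
next
  assume between: "root_lo a b k < x \<and> x < root_hi a b k"
  then have "b\<^sup>2 - 4*a*k \<ge> 0"
    using root_lo_less_root_hi_iff[OF assms, of b k] by linarith
  with assms between show "a*x\<^sup>2 - b*x + k < 0"
    by (simp add: quadratic_eq_root_factors mult_pos_neg mult_neg_pos)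
qed

lemma DERIV_quadratic_ratio:
  fixes p q r x :: real
  assumes "r - p*x \<noteq> 0"
  shows "((\<lambda>y. (r\<^sup>2 - q*y\<^sup>2) / (r - p*y)\<^sup>2) has_real_derivative
          2*r*(p*r - q*x) / (r - p*x)^3) (at x)"
proof -
  define d where "d = r - p*x"
  have "((\<lambda>y. (r\<^sup>2 - q*y\<^sup>2) / (r - p*y)\<^sup>2) has_real_derivative
          ((-(2*q*x)) * d\<^sup>2 - (r\<^sup>2 - q*x\<^sup>2) * (2*d*(-p))) / (d\<^sup>2)\<^sup>2) (at x)"
    using assms unfolding d_def
    by (intro DERIV_quotient derivative_eq_intros) auto
  also have "(-(2*q*x)) * d\<^sup>2 - (r\<^sup>2 - q*x\<^sup>2) * (2*d*(-p)) = 2*r*(p*r - q*x) * d"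
    unfolding d_def by algebra
  also have "2*r*(p*r - q*x) * d / (d\<^sup>2)\<^sup>2 = 2*r*(p*r - q*x) / d^3"
    using assms by (simp add: d_def[symmetric] power2_eq_square power3_eq_cube)
  finally show ?thesis unfolding d_def .
qed

lemma Qv_pos:
  assumes "C \<ge> 2"
  shows "Qv C x hS > 0"
proof -
  have C1: "real C - 1 > 0" using assms by simp
  have "real C * (p1 C x)\<^sup>2 + (p0 C x)\<^sup>2 > 0"
  proof (cases "p0 C x = 0")
    case True
    then have "p1 C x \<noteq> 0" using C1 assms by (auto simp: p0_def p1_def)
    then show ?thesis using assms by (simp add: add_pos_nonneg)
  next
    case False
    then show ?thesis using assms by (simp add: add_nonneg_pos)
  qed
  moreover have "real C * (1 - hS)\<^sup>2 / (real C - 1) \<ge> 0" using C1 by simp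
  ultimately show ?thesis unfolding Qv_def by linarith
qed

lemma sgn_p0:
  assumes "C \<ge> 2"
  shows "sgn (p0 C x) = sgn (x - 1 / real C)"
proof -
  have "p0 C x = real C / (real C - 1) * (x - 1 / real C)"
    using assms by (simp add: p0_def field_simps)
  moreover have "real C / (real C - 1) > 0" using assms by simp
  ultimately show ?thesis by (simp only: sgn_mult sgn_pos)
qed

lemma abs_p0_le_1:
  assumes "C \<ge> 2" "0 \<le> x" "x \<le> 1"
  shows "\<bar>p0 C x\<bar> \<le> 1"
proof -
  have "0 \<le> x * real C" "x * real C \<le> real C"
    using assms mult_left_le_one_le[of "real C" x] by (simp_all add: mult.commute)
  moreover have C: "real C \<ge> 2" using assms by simp
  ultimately have "\<bar>x * real C - 1\<bar> \<le> real C - 1"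
    unfolding abs_le_iff by linarith
  then show ?thesis using C by (simp add: p0_def abs_divide pos_divide_le_eq)
qed

lemma J_G_eq_quadratic_ratio:
  assumes "rho \<noteq> 0"
  shows "J_G C rho hL hS y = (p0 C hL)\<^sup>2 / Qv C hL hS *
           ((rho\<^sup>2 - Qv C hL hS * y\<^sup>2) / (rho - p0 C hL * y)\<^sup>2)"
proof -
  have "1 - (y/rho)\<^sup>2 * Qv C hL hS = (rho\<^sup>2 - Qv C hL hS * y\<^sup>2) / rho\<^sup>2"
    "(1 - y/rho * p0 C hL)\<^sup>2 = (rho - p0 C hL * y)\<^sup>2 / rho\<^sup>2"
    using assms by (simp_all add: field_simps power2_eq_square)
  then show ?thesis using assms by (simp add: J_G_def J_notG_def omega_def)
qed

lemma J_G_has_real_derivative: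
  assumes "C \<ge> 2" "rho \<noteq> 0" "rho - p0 C hL * hF \<noteq> 0"
  shows "(J_G C rho hL hS has_real_derivative
           2*rho*(p0 C hL)\<^sup>2 * (hF_hat C rho hL hS - hF) / (rho - p0 C hL * hF)^3) (at hF)"
proof -
  define p q where "p = p0 C hL" and "q = Qv C hL hS"
  have q: "q > 0" using Qv_pos assms(1) by (simp add: q_def)
  have J_G: "J_G C rho hL hS = (\<lambda>y. p\<^sup>2/q * ((rho\<^sup>2 - q*y\<^sup>2) / (rho - p*y)\<^sup>2))"
    using J_G_eq_quadratic_ratio[OF assms(2)] by (auto simp: p_def q_def)
  have "((\<lambda>y. p\<^sup>2/q * ((rho\<^sup>2 - q*y\<^sup>2) / (rho - p*y)\<^sup>2)) has_real_derivative
          p\<^sup>2/q * (2*rho*(p*rho - q*hF) / (rho - p*hF)^3)) (at hF)"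
    using assms(3) unfolding p_def by (intro DERIV_cmult DERIV_quadratic_ratio)
  also have "p\<^sup>2/q * (2*rho*(p*rho - q*hF) / (rho - p*hF)^3)
      = 2*rho*p\<^sup>2 * (hF_hat C rho hL hS - hF) / (rho - p*hF)^3"
    using q by (simp add: hF_hat_def p_def q_def field_simps)
  finally show ?thesis unfolding J_G p_def .
qed

lemma J_G_deriv_sgn:
  assumes "C \<ge> 2" "rho \<ge> 1" "0 \<le> hL" "hL \<le> 1" "\<bar>hF\<bar> < 1"
  shows "J_G C rho hL hS differentiable (at hF)"
    and "sgn (deriv (J_G C rho hL hS) hF) =
           (if hL = 1 / real C then 0 else sgn (hF_hat C rho hL hS - hF))"
proof -
  define p where "p = p0 C hL"
  have "\<bar>p * hF\<bar> \<le> \<bar>hF\<bar>"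
    using abs_p0_le_1[OF assms(1,3,4)] by (simp add: p_def abs_mult mult_left_le_one_le)
  then have den: "rho - p * hF > 0" using assms(2,5) by linarith
  note D = J_G_has_real_derivative[OF assms(1), of rho hL hF hS]
  show "J_G C rho hL hS differentiable (at hF)"
    using D den assms(2) real_differentiable_def unfolding p_def by fastforce
  have "sgn (deriv (J_G C rho hL hS) hF) = sgn p * sgn p * sgn (hF_hat C rho hL hS - hF)"
    using DERIV_imp_deriv[OF D] den assms(2) unfolding p_def
    by (simp add: sgn_mult sgn_divide power2_eq_square power3_eq_cube)
  also have "sgn p = sgn (hL - 1 / real C)" using sgn_p0[OF assms(1)] by (simp add: p_def)
  finally show "sgn (deriv (J_G C rho hL hS) hF) =
      (if hL = 1 / real C then 0 else sgn (hF_hat C rho hL hS - hF))"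
    by (auto simp: sgn_if)
qed

lemma Qv_add_p0_quadratic:
  assumes "C \<ge> 2"
  shows "(real C - 1)\<^sup>2 * (Qv C x hS + r * p0 C x) =
    real C * (real C + 1) * x\<^sup>2 - (4 * real C - real C * (real C - 1) * r) * x
      + (real C + 1 - (real C - 1) * r + real C * (real C - 1) * (1 - hS)\<^sup>2)"
proof -
  define c where "c = real C"
  have c: "c - 1 \<noteq> 0" using assms by (simp add: c_def)
  have p0: "(c - 1) * p0 C x = c*x - 1" and p1: "(c - 1) * p1 C x = 1 - x"
    using c by (simp_all add: p0_def p1_def c_def)
  have "(c - 1)\<^sup>2 * (Qv C x hS + r * p0 C x) =
      c * ((c - 1) * p1 C x)\<^sup>2 + c * (c - 1) * (1 - hS)\<^sup>2 + ((c - 1) * p0 C x)\<^sup>2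
        + r * (c - 1) * ((c - 1) * p0 C x)"
    using c unfolding Qv_def c_def[symmetric] by (simp add: field_simps power2_eq_square)
  also have "\<dots> = c * (c + 1) * x\<^sup>2 - (4 * c - c * (c - 1) * r) * x
      + (c + 1 - (c - 1) * r + c * (c - 1) * (1 - hS)\<^sup>2)"
    unfolding p0 p1 by algebra
  finally show ?thesis unfolding c_def .
qed

definition Qv_p0_root_lo :: "nat \<Rightarrow> real \<Rightarrow> real \<Rightarrow> real" where
  "Qv_p0_root_lo C r hS = root_lo (real C * (real C + 1)) (4 * real C - real C * (real C - 1) * r)
     (real C + 1 - (real C - 1) * r + real C * (real C - 1) * (1 - hS)\<^sup>2)"

definition Qv_p0_root_hi :: "nat \<Rightarrow> real \<Rightarrow> real \<Rightarrow> real" where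
  "Qv_p0_root_hi C r hS = root_hi (real C * (real C + 1)) (4 * real C - real C * (real C - 1) * r)
     (real C + 1 - (real C - 1) * r + real C * (real C - 1) * (1 - hS)\<^sup>2)"

lemma hL_minus_eq_Qv_p0_root_hi: "hL_minus C rho hS = Qv_p0_root_hi C rho hS"
  by (simp add: hL_minus_def Qv_p0_root_hi_def root_hi_def mult.assoc)

lemma hL_plus_eq_Qv_p0_root_lo: "hL_plus C rho hS = Qv_p0_root_lo C (- rho) hS"
  by (simp add: hL_plus_def Qv_p0_root_lo_def root_lo_def mult.assoc)

lemma Qv_add_p0_neg_iff:
  assumes "C \<ge> 2"
  shows "Qv C x hS + r * p0 C x < 0 \<longleftrightarrow> Qv_p0_root_lo C r hS < x \<and> x < Qv_p0_root_hi C r hS"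
proof -
  have "(real C - 1)\<^sup>2 > 0" using assms by simp
  then have "Qv C x hS + r * p0 C x < 0 \<longleftrightarrow> (real C - 1)\<^sup>2 * (Qv C x hS + r * p0 C x) < 0"
    by (simp add: mult_less_0_iff)
  also have "\<dots> \<longleftrightarrow> Qv_p0_root_lo C r hS < x \<and> x < Qv_p0_root_hi C r hS"
    unfolding Qv_add_p0_quadratic[OF assms] Qv_p0_root_lo_def Qv_p0_root_hi_def
    using assms by (intro quadratic_neg_iff_between_roots) simp
  finally show ?thesis .
qed

lemma Qv_add_p0_roots_eq_0:
  assumes "C \<ge> 2" "Qv C u hS + r * p0 C u < 0"
  shows "Qv C (Qv_p0_root_lo C r hS) hS + r * p0 C (Qv_p0_root_lo C r hS) = 0"
    and "Qv C (Qv_p0_root_hi C r hS) hS + r * p0 C (Qv_p0_root_hi C r hS) = 0"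
proof -
  define a b k where "a = real C * (real C + 1)" and "b = 4 * real C - real C * (real C - 1) * r"
    and "k = real C + 1 - (real C - 1) * r + real C * (real C - 1) * (1 - hS)\<^sup>2"
  have a: "a > 0" using assms(1) by (simp add: a_def)
  have "root_lo a b k < root_hi a b k"
    using Qv_add_p0_neg_iff[OF assms(1)] assms(2)
    by (simp add: Qv_p0_root_lo_def Qv_p0_root_hi_def a_def b_def k_def)
  then have disc: "b\<^sup>2 - 4*a*k \<ge> 0" using root_lo_less_root_hi_iff[OF a] by simp
  have root: "Qv C z hS + r * p0 C z = 0" if "a*z\<^sup>2 - b*z + k = 0" for z
  proof -
    have "(real C - 1)\<^sup>2 * (Qv C z hS + r * p0 C z) = 0"
      using that Qv_add_p0_quadratic[OF assms(1), of z hS r] by (simp add: a_def b_def k_def)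
    moreover have "(real C - 1)\<^sup>2 \<noteq> 0" using assms(1) by simp
    ultimately show ?thesis by simp
  qed
  show "Qv C (Qv_p0_root_lo C r hS) hS + r * p0 C (Qv_p0_root_lo C r hS) = 0"
    unfolding Qv_p0_root_lo_def a_def[symmetric] b_def[symmetric] k_def[symmetric]
    using a disc by (intro root quadratic_root_lo_eq_0) simp_all
  show "Qv C (Qv_p0_root_hi C r hS) hS + r * p0 C (Qv_p0_root_hi C r hS) = 0"
    unfolding Qv_p0_root_hi_def a_def[symmetric] b_def[symmetric] k_def[symmetric]
    using a disc by (intro root quadratic_root_hi_eq_0) simp_all
qed

lemma hF_hat_less_minus_one_iff:
  assumes "C \<ge> 2"
  shows "hF_hat C rho hL hS < -1 \<longleftrightarrow> Qv C hL hS + rho * p0 C hL < 0"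
  using Qv_pos[OF assms, of hL hS] by (auto simp: hF_hat_def pos_divide_less_eq)

lemma one_less_hF_hat_iff:
  assumes "C \<ge> 2"
  shows "1 < hF_hat C rho hL hS \<longleftrightarrow> Qv C hL hS + (- rho) * p0 C hL < 0"
  using Qv_pos[OF assms, of hL hS] by (auto simp: hF_hat_def pos_less_divide_eq)

lemma Qv_add_p0_at_0_neg:
  assumes "C \<ge> 2" "rho \<ge> real C + 4" "0 \<le> hS" "hS \<le> 1"
  shows "Qv C 0 hS + rho * p0 C 0 < 0"
proof -
  have "real C * (real C - 1) * (1 - hS)\<^sup>2 \<le> real C * (real C - 1)"
    using assms by (intro mult_left_le power_le_one) auto
  moreover have "(real C - 1) * (real C + 4) \<le> (real C - 1) * rho"
    using assms by (intro mult_left_mono) auto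
  ultimately have "(real C - 1)\<^sup>2 * (Qv C 0 hS + rho * p0 C 0) < 0"
    using assms unfolding Qv_add_p0_quadratic[OF assms(1)]
    by (simp add: algebra_simps power2_eq_square)
  then show ?thesis by (simp add: mult_less_0_iff)
qed

lemma Qv_sub_p0_at_1_neg:
  assumes "C \<ge> 2" "rho > 3" "0 \<le> hS" "hS \<le> 1"
  shows "Qv C 1 hS + (- rho) * p0 C 1 < 0"
proof -
  have "real C * (1 - hS)\<^sup>2 \<le> real C"
    using assms by (intro mult_left_le power_le_one) auto
  also have "real C \<le> 2 * (real C - 1)" using assms(1) by simp
  finally have "real C * (1 - hS)\<^sup>2 / (real C - 1) \<le> 2"
    using assms(1) by (simp add: divide_le_eq)
  with assms show ?thesis by (simp add: Qv_def p0_def p1_def)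
qed

lemma hL_minus_bounds:
  assumes "C \<ge> 2" "rho \<ge> real C + 4" "0 \<le> hS" "hS \<le> 1"
  shows "0 < hL_minus C rho hS" "hL_minus C rho hS < 1 / real C"
    and "\<And>hL. 0 < hL \<Longrightarrow> hL < hL_minus C rho hS \<Longrightarrow> hF_hat C rho hL hS < -1"
proof -
  note neg0 = Qv_add_p0_at_0_neg[OF assms]
  have around0: "Qv_p0_root_lo C rho hS < 0" "0 < Qv_p0_root_hi C rho hS"
    using neg0 Qv_add_p0_neg_iff[OF assms(1)] by blast+
  then show "0 < hL_minus C rho hS" by (simp add: hL_minus_eq_Qv_p0_root_hi)
  have "rho * p0 C (hL_minus C rho hS) < 0"
    using Qv_add_p0_roots_eq_0(2)[OF assms(1) neg0] Qv_pos[OF assms(1), of "hL_minus C rho hS" hS]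
    unfolding hL_minus_eq_Qv_p0_root_hi by linarith
  then have "sgn (p0 C (hL_minus C rho hS)) < 0"
    using assms(1,2) by (simp add: mult_less_0_iff sgn_less)
  then show "hL_minus C rho hS < 1 / real C"
    unfolding sgn_p0[OF assms(1)] by (simp add: sgn_less)
  show "hF_hat C rho hL hS < -1" if "0 < hL" "hL < hL_minus C rho hS" for hL
    using that around0
    unfolding hF_hat_less_minus_one_iff[OF assms(1)] Qv_add_p0_neg_iff[OF assms(1)]
    by (simp add: hL_minus_eq_Qv_p0_root_hi)
qed

lemma hL_plus_bounds:
  assumes "C \<ge> 2" "rho > 3" "0 \<le> hS" "hS \<le> 1"
  shows "1 / real C < hL_plus C rho hS" "hL_plus C rho hS < 1"
    and "\<And>hL. hL_plus C rho hS < hL \<Longrightarrow> hL \<le> 1 \<Longrightarrow> 1 < hF_hat C rho hL hS"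
proof -
  note neg1 = Qv_sub_p0_at_1_neg[OF assms]
  have around1: "Qv_p0_root_lo C (- rho) hS < 1" "1 < Qv_p0_root_hi C (- rho) hS"
    using neg1 Qv_add_p0_neg_iff[OF assms(1)] by blast+
  then show "hL_plus C rho hS < 1" by (simp add: hL_plus_eq_Qv_p0_root_lo)
  have "rho * p0 C (hL_plus C rho hS) > 0"
    using Qv_add_p0_roots_eq_0(1)[OF assms(1) neg1] Qv_pos[OF assms(1), of "hL_plus C rho hS" hS]
    unfolding hL_plus_eq_Qv_p0_root_lo by linarith
  then have "sgn (p0 C (hL_plus C rho hS)) > 0"
    using assms(2) by (simp add: zero_less_mult_iff sgn_greater)
  then show "1 / real C < hL_plus C rho hS"
    unfolding sgn_p0[OF assms(1)] by (simp add: sgn_greater)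
  show "1 < hF_hat C rho hL hS" if "hL_plus C rho hS < hL" "hL \<le> 1" for hL
    using that around1
    unfolding one_less_hF_hat_iff[OF assms(1)] Qv_add_p0_neg_iff[OF assms(1)]
    by (simp add: hL_plus_eq_Qv_p0_root_lo)
qed

theorem theorem2p3:
  fixes C :: nat
  assumes "C \<ge> 2"
  shows "\<exists>rho0 > 0. \<forall>rho hS. rho \<ge> rho0 \<and> 0 \<le> hS \<and> hS \<le> 1 \<longrightarrow>
    (0 < hL_minus C rho hS \<and> hL_minus C rho hS < hL_plus C rho hS \<and> hL_plus C rho hS < 1) \<and>
    (\<forall>hL hF. 0 \<le> hL \<and> hL \<le> 1 \<and> -1 < hF \<and> hF < 1 \<longrightarrow>
      (let J = (\<lambda>x. J_G C rho hL hS x);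
           d = deriv J hF;
           hm = hL_minus C rho hS; hp = hL_plus C rho hS;
           hh = hF_hat C rho hL hS
       in J differentiable (at hF) \<and>
          (hL = 1 / real C \<longrightarrow> d = 0) \<and>
          (hL \<noteq> 1 / real C \<longrightarrow>
             sgn d = sgn (hh - hF) \<and>
             ((0 < hL \<and> hL < hm) \<or> (hm < hL \<and> hL < hp \<and> hh < hF) \<longrightarrow> d < 0) \<and>
             ((hp < hL \<and> hL \<le> 1) \<or> (hm < hL \<and> hL < hp \<and> hF < hh) \<longrightarrow> d > 0) \<and>
             (hm < hL \<and> hL < hp \<and> hF = hh \<longrightarrow> d = 0))))"
proof (intro exI[of _ "real C + 4"] conjI allI impI, goal_cases)
  case 1
  show ?case by simp
next
  case (2 rho hS)
  then show ?case using hL_minus_bounds(1)[OF assms] by simp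
next
  case (3 rho hS)
  then have "hL_minus C rho hS < 1 / real C" "1 / real C < hL_plus C rho hS"
    using hL_minus_bounds(2)[OF assms] hL_plus_bounds(1)[OF assms] by simp_all
  then show ?case by linarith
next
  case (4 rho hS)
  then show ?case using hL_plus_bounds(2)[OF assms] by simp
next
  case (5 rho hS hL hF)
  then have rho: "rho \<ge> real C + 4" "rho > 3" "0 \<le> hS" "hS \<le> 1"
    and hL: "0 \<le> hL" "hL \<le> 1" and hF: "\<bar>hF\<bar> < 1" by auto
  show ?case
    unfolding Let_def
    using J_G_deriv_sgn[OF assms _ hL hF, of rho hS] rho hF
      hL_minus_bounds(3)[OF assms rho(1,3,4), of hL] hL_plus_bounds(3)[OF assms rho(2-4), of hL]
    by (auto simp: sgn_if split: if_splits)
qed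

end
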